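(* Let Assumptions 1 and 2 hold, let $S\ge1$ be an integer and $B>0$. Let $u_1,\dots,u_T\in\mathbb{R}^N$ be payoff vectors, set $u_\tau=0$ for $\tau\le0$, and assume $\|u_t-u_{t-1}\|_\infty\le B$ for all $t=1,\dots,T$. Consider OFTRL with $S$-step recency bias, $\beta_t=\frac1S\sum_{\tau=t-S}^{t-1}u_\tau$ and $x_t=\arg\max_{x\in\Delta_N}\{\langle\theta_{t-1}+\beta_t,x\rangle-\mathcal R(x)\}$, $t=1,\dots,T$. If $\varphi_1(0)>0$ and $\eta=\sqrt{\frac{LTS^2B^2}{2\varphi_1(0)}}$, then $$R^T_{OFTRL}\le SB\sqrt{2LT\varphi_1(0)} .$$
   Context: Let $N\ge 2$, $A=\{1,\dots,N\}$, and $\Delta_N=\{x\in\mathbb{R}^N: x_i\ge 0,\ \sum_i x_i=1\}$. Let $\epsilon=(\epsilon_1,\dots,\epsilon_N)$ be a random vector satisfying Assumption 1: each $\epsilon_i$ is integrable with $\mathbb{E}[\epsilon_i]=0$, and the law of $\epsilon$ is absolutely continuous with respect to Lebesgue measure on $\mathbb{R}^N$ with support all of $\mathbb{R}^N$. For $\eta>0$ the social surplus function is $\varphi_\eta(\theta)=\mathbb{E}[\max_{j\in A}(\theta_j+\eta\epsilon_j)]$, $\theta\in\mathbb{R}^N$; thus $\varphi_\eta(\theta)=\eta\varphi_1(\theta/\eta)$, and $\varphi_1(0)=\mathbb{E}[\max_i\epsilon_i]$. $\varphi_\eta$ is convex and differentiable with $\nabla\varphi_\eta(\theta)\in\Delta_N$.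 Assumption 2: $\varphi_1$ is twice continuously differentiable and there is a constant $L>0$ with $2\,\mathrm{tr}(\nabla^2\varphi_1(\theta))\le L$ for all $\theta\in\mathbb{R}^N$. Set $\theta_0=0$, $\theta_t=\sum_{s=1}^tu_s$. Regularizer: $\mathcal R(x)=\sup_{\theta\in\mathbb{R}^N}\{\langle\theta,x\rangle-\varphi_\eta(\theta)\}$ for $x\in\Delta_N$. The regret of $x_1,\dots,x_T$ is $R^T=\max_{x\in\Delta_N}\langle\theta_T,x\rangle-\sum_{t=1}^T\langle u_t,x_t\rangle$. *)

theory Defs
  imports "HOL-Probability.Probability"
begin

text \<open>Probability prob_simplex in R^N (index type 'n, N = CARD('n)).\<close>
definition prob_simplex :: "(real ^ 'n) set" where
  "prob_simplex = {x. (\<forall>i. 0 \<le> x $ i) \<and> (\<Sum>i\<in>UNIV. x $ i) = 1}"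

definition linf_norm :: "real ^ 'n \<Rightarrow> real" where
  "linf_norm v = Max (range (\<lambda>i. \<bar>v $ i\<bar>))"

definition surplus :: "'a measure \<Rightarrow> ('a \<Rightarrow> real ^ 'n) \<Rightarrow> real \<Rightarrow> real ^ 'n \<Rightarrow> real" where
  "surplus M eps eta theta = (\<integral>\<omega>. Max (range (\<lambda>j. theta $ j + eta * eps \<omega> $ j)) \<partial>M)"

definition regularizer :: "'a measure \<Rightarrow> ('a \<Rightarrow> real ^ 'n) \<Rightarrow> real \<Rightarrow> real ^ 'n \<Rightarrow> real" where
  "regularizer M eps eta x = (SUP theta. theta \<bullet> x - surplus M eps eta theta)"

definition cumul :: "(int \<Rightarrow> real ^ 'n) \<Rightarrow> int \<Rightarrow> real ^ 'n" where
  "cumul u t = (\<Sum>s\<in>{1..t}. u s)"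

definition recency :: "nat \<Rightarrow> (int \<Rightarrow> real ^ 'n) \<Rightarrow> int \<Rightarrow> real ^ 'n" where
  "recency S u t = (1 / real S) *\<^sub>R (\<Sum>\<tau>\<in>{t - int S..t - 1}. u \<tau>)"

definition regret :: "(int \<Rightarrow> real ^ 'n) \<Rightarrow> (int \<Rightarrow> real ^ 'n) \<Rightarrow> nat \<Rightarrow> real" where
  "regret u x T = (SUP y\<in>prob_simplex. cumul u (int T) \<bullet> y) - (\<Sum>t\<in>{1..int T}. u t \<bullet> x t)"

end

theory Submission
  imports Defs
begin

(* Since the regularizer is the convex conjugate of phi_eta, the OFTRL iterate x_t is the
   gradient of phi_eta at the optimistic point z_t = theta_(t-1) + beta_t.  The gradient
   inequality at z_t bounds phi_eta(theta_(t-1)) from below, and a second-order bound bounds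
   phi_eta(theta_t) from above; as theta_t - z_t = u_t - beta_t has sup norm at most S B, this
   gives phi_eta(theta_t) - phi_eta(theta_(t-1)) <= <u_t, x_t> + L S^2 B^2 / (2 eta).
   Telescoping, and bounding max_x <theta_T, x> by phi_eta(theta_T), yields
   R^T <= eta phi_1(0) + T L S^2 B^2 / (2 eta), which the choice of eta balances.
   The second-order bound in the sup norm comes from the shape of the Hessian of phi_1: its
   rows sum to zero (phi_1 commutes with adding constants) and its off-diagonal entries are
   nonpositive (the expected maximum is submodular), so h' Hess h <= 2 tr(Hess) |h|_oo^2. *)

definition max_coord :: "real ^ 'n \<Rightarrow> real" where
  "max_coord v = Max (range (\<lambda>j. v $ j))"

lemma max_coord_ge: "v $ k \<le> max_coord v"
  unfolding max_coord_def by (rule Max_ge) auto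

lemma max_coord_le: "(\<And>k. v $ k \<le> c) \<Longrightarrow> max_coord v \<le> c"
  unfolding max_coord_def by (subst Max_le_iff) auto

lemma max_coord_attained: obtains k where "max_coord v = v $ k"
proof -
  have "Max (range (\<lambda>j. v $ j)) \<in> range (\<lambda>j. v $ j)" by (rule Max_in) auto
  then show ?thesis using that unfolding max_coord_def by blast
qed

lemma max_coord_mono: "(\<And>k. v $ k \<le> w $ k) \<Longrightarrow> max_coord v \<le> max_coord w"
  by (meson max_coord_ge max_coord_le order_trans)

lemma max_coord_scaleR:
  assumes "c \<ge> 0" shows "max_coord (c *\<^sub>R v) = c * max_coord v"
proof (rule antisym)
  show "max_coord (c *\<^sub>R v) \<le> c * max_coord v"
    using assms by (intro max_coord_le) (simp add: max_coord_ge mult_left_mono)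
  obtain k where "max_coord v = v $ k" by (rule max_coord_attained)
  then show "c * max_coord v \<le> max_coord (c *\<^sub>R v)"
    using max_coord_ge[of "c *\<^sub>R v" k] by simp
qed

lemma max_coord_add_const: "max_coord (v + c *\<^sub>R 1) = max_coord v + c"
proof (rule antisym)
  show "max_coord (v + c *\<^sub>R 1) \<le> max_coord v + c"
    by (intro max_coord_le) (simp add: max_coord_ge)
  obtain k where "max_coord v = v $ k" by (rule max_coord_attained)
  then show "max_coord v + c \<le> max_coord (v + c *\<^sub>R 1)"
    using max_coord_ge[of "v + c *\<^sub>R 1" k] by simp
qed

lemma convex_max_coord: "convex_on UNIV max_coord"
proof (rule convex_onI[OF _ convex_UNIV])
  fix t :: real and v w :: "real ^ 'n"
  assume "0 < t" "t < 1"
  then show "max_coord ((1 - t) *\<^sub>R v + t *\<^sub>R w) \<le> (1 - t) * max_coord v + t * max_coord w"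
    by (intro max_coord_le) (simp add: add_mono mult_left_mono max_coord_ge)
qed

lemma max_coord_submodular:
  assumes "i \<noteq> j" "s \<ge> 0" "a \<ge> 0"
  shows "max_coord (w + s *\<^sub>R axis j 1 + a *\<^sub>R axis i 1) + max_coord w
     \<le> max_coord (w + s *\<^sub>R axis j 1) + max_coord (w + a *\<^sub>R axis i 1)"
proof -
  obtain k where k: "max_coord (w + s *\<^sub>R axis j 1 + a *\<^sub>R axis i 1)
      = (w + s *\<^sub>R axis j 1 + a *\<^sub>R axis i 1) $ k"
    by (rule max_coord_attained)
  have "max_coord w \<le> max_coord (w + s *\<^sub>R axis j 1)"
    and "max_coord w \<le> max_coord (w + a *\<^sub>R axis i 1)"
    using assms by (auto intro!: max_coord_mono simp: axis_def)
  moreover note max_coord_ge[of "w + s *\<^sub>R axis j 1" k] max_coord_ge[of "w + a *\<^sub>R axis i 1" k]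
    max_coord_ge[of w k]
  ultimately show ?thesis
    using k assms(1) by (cases "k = i"; cases "k = j") (auto simp: axis_def)
qed

lemma abs_max_coord_le: "\<bar>max_coord v\<bar> \<le> (\<Sum>k\<in>UNIV. \<bar>v $ k\<bar>)"
proof -
  obtain k where "max_coord v = v $ k" by (rule max_coord_attained)
  moreover have "\<bar>v $ k\<bar> \<le> (\<Sum>k\<in>UNIV. \<bar>v $ k\<bar>)" by (rule member_le_sum) auto
  ultimately show ?thesis by simp
qed

lemma inner_le_max_coord:
  assumes "y \<in> prob_simplex" shows "v \<bullet> y \<le> max_coord v"
proof -
  have "v \<bullet> y = (\<Sum>i\<in>UNIV. v $ i * y $ i)" by (simp add: inner_vec_def)
  also have "\<dots> \<le> (\<Sum>i\<in>UNIV. max_coord v * y $ i)"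
    using assms unfolding prob_simplex_def by (intro sum_mono mult_right_mono max_coord_ge) auto
  also have "\<dots> = max_coord v"
    using assms unfolding prob_simplex_def by (simp add: sum_distrib_left[symmetric])
  finally show ?thesis .
qed

lemma axis_in_prob_simplex: "axis k 1 \<in> prob_simplex"
  unfolding prob_simplex_def by (auto simp: axis_def)

section \<open>The social surplus function\<close>

lemma surplus_eq_max_coord:
  "surplus M eps eta \<theta> = (\<integral>\<omega>. max_coord (\<theta> + eta *\<^sub>R eps \<omega>) \<partial>M)"
  unfolding surplus_def max_coord_def by simp

context prob_space
begin

context
  fixes eps :: "'a \<Rightarrow> real ^ 'n"
  assumes integ: "\<forall>i. integrable M (\<lambda>\<omega>. eps \<omega> $ i)"
begin

lemma integrable_max_coord: "integrable M (\<lambda>\<omega>. max_coord (\<theta> + eta *\<^sub>R eps \<omega>))"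
proof (rule Bochner_Integration.integrable_bound)
  show "integrable M (\<lambda>\<omega>. \<Sum>k\<in>UNIV. \<bar>\<theta> $ k + eta * eps \<omega> $ k\<bar>)"
    using integ by (intro Bochner_Integration.integrable_sum Bochner_Integration.integrable_abs
        Bochner_Integration.integrable_add Bochner_Integration.integrable_mult_right
        integrable_const) auto
  have "(\<lambda>\<omega>. Max (range (\<lambda>k. \<theta> $ k + eta * eps \<omega> $ k))) \<in> borel_measurable M"
    using integ by (intro borel_measurable_Max borel_measurable_add borel_measurable_const
        borel_measurable_scaleR borel_measurable_integrable) auto
  then show "(\<lambda>\<omega>. max_coord (\<theta> + eta *\<^sub>R eps \<omega>)) \<in> borel_measurable M"
    unfolding max_coord_def by simp
  show "AE \<omega> in M. norm (max_coord (\<theta> + eta *\<^sub>R eps \<omega>))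
      \<le> norm (\<Sum>k\<in>UNIV. \<bar>\<theta> $ k + eta * eps \<omega> $ k\<bar>)"
    using abs_max_coord_le[of "\<theta> + eta *\<^sub>R eps _"] by auto
qed

lemma surplus_ge_inner:
  assumes mean0: "\<forall>i. (\<integral>\<omega>. eps \<omega> $ i \<partial>M) = 0" and y: "y \<in> prob_simplex"
  shows "\<theta> \<bullet> y \<le> surplus M eps eta \<theta>"
proof -
  have integrable: "integrable M (\<lambda>\<omega>. \<theta> $ i * y $ i + eta * y $ i * eps \<omega> $ i)" for i
    using integ by (intro Bochner_Integration.integrable_add Bochner_Integration.integrable_mult_right
        integrable_const) auto
  have "\<theta> \<bullet> y = (\<Sum>i\<in>UNIV. \<integral>\<omega>. \<theta> $ i * y $ i + eta * y $ i * eps \<omega> $ i \<partial>M)"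
    using mean0 integ prob_space
    by (simp add: inner_vec_def integrable_const)
  also have "\<dots> = (\<integral>\<omega>. (\<theta> + eta *\<^sub>R eps \<omega>) \<bullet> y \<partial>M)"
    using integrable by (simp add: inner_vec_def algebra_simps)
  also have "\<dots> \<le> surplus M eps eta \<theta>"
    unfolding surplus_eq_max_coord using integrable
    by (intro integral_mono integrable_max_coord inner_le_max_coord y)
      (auto simp: inner_vec_def algebra_simps)
  finally show ?thesis .
qed

lemma convex_surplus: "convex_on UNIV (surplus M eps eta)"
proof (rule convex_onI[OF _ convex_UNIV])
  fix t :: real and v w :: "real ^ 'n"
  assume t: "0 < t" "t < 1"
  have "surplus M eps eta ((1 - t) *\<^sub>R v + t *\<^sub>R w)
      \<le> (\<integral>\<omega>. (1 - t) * max_coord (v + eta *\<^sub>R eps \<omega>) + t * max_coord (w + eta *\<^sub>R eps \<omega>) \<partial>M)"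
    unfolding surplus_eq_max_coord
  proof (intro integral_mono integrable_max_coord)
    fix \<omega>
    have "(1 - t) *\<^sub>R v + t *\<^sub>R w + eta *\<^sub>R eps \<omega>
        = (1 - t) *\<^sub>R (v + eta *\<^sub>R eps \<omega>) + t *\<^sub>R (w + eta *\<^sub>R eps \<omega>)"
      by (simp add: algebra_simps)
    then show "max_coord ((1 - t) *\<^sub>R v + t *\<^sub>R w + eta *\<^sub>R eps \<omega>)
        \<le> (1 - t) * max_coord (v + eta *\<^sub>R eps \<omega>) + t * max_coord (w + eta *\<^sub>R eps \<omega>)"
      using convex_onD[OF convex_max_coord, of t] t by simp
  qed (auto intro!: integrable_max_coord)
  also have "\<dots> = (1 - t) * surplus M eps eta v + t * surplus M eps eta w"
    unfolding surplus_eq_max_coord by (simp add: integrable_max_coord)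
  finally show "surplus M eps eta ((1 - t) *\<^sub>R v + t *\<^sub>R w)
      \<le> (1 - t) * surplus M eps eta v + t * surplus M eps eta w" .
qed

lemma surplus_mono: "(\<And>k. v $ k \<le> w $ k) \<Longrightarrow> surplus M eps eta v \<le> surplus M eps eta w"
  unfolding surplus_eq_max_coord by (intro integral_mono integrable_max_coord max_coord_mono) auto

lemma surplus_add_const: "surplus M eps eta (\<theta> + c *\<^sub>R 1) = surplus M eps eta \<theta> + c"
proof -
  have "surplus M eps eta (\<theta> + c *\<^sub>R 1) = (\<integral>\<omega>. max_coord (\<theta> + eta *\<^sub>R eps \<omega>) + c \<partial>M)"
    unfolding surplus_eq_max_coord using max_coord_add_const[of "\<theta> + eta *\<^sub>R eps _" c]
    by (simp add: algebra_simps)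
  then show ?thesis
    unfolding surplus_eq_max_coord
    by (simp add: integrable_max_coord integrable_const prob_space)
qed

lemma surplus_submodular:
  assumes "i \<noteq> j" "s \<ge> 0" "a \<ge> 0"
  shows "surplus M eps eta (w + s *\<^sub>R axis j 1 + a *\<^sub>R axis i 1) + surplus M eps eta w
     \<le> surplus M eps eta (w + s *\<^sub>R axis j 1) + surplus M eps eta (w + a *\<^sub>R axis i 1)"
proof -
  have "(\<integral>\<omega>. max_coord (w + s *\<^sub>R axis j 1 + a *\<^sub>R axis i 1 + eta *\<^sub>R eps \<omega>)
        + max_coord (w + eta *\<^sub>R eps \<omega>) \<partial>M)
      \<le> (\<integral>\<omega>. max_coord (w + s *\<^sub>R axis j 1 + eta *\<^sub>R eps \<omega>)
        + max_coord (w + a *\<^sub>R axis i 1 + eta *\<^sub>R eps \<omega>) \<partial>M)"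
  proof (intro integral_mono Bochner_Integration.integrable_add integrable_max_coord)
    fix \<omega>
    show "max_coord (w + s *\<^sub>R axis j 1 + a *\<^sub>R axis i 1 + eta *\<^sub>R eps \<omega>)
        + max_coord (w + eta *\<^sub>R eps \<omega>)
      \<le> max_coord (w + s *\<^sub>R axis j 1 + eta *\<^sub>R eps \<omega>)
        + max_coord (w + a *\<^sub>R axis i 1 + eta *\<^sub>R eps \<omega>)"
      using max_coord_submodular[OF assms, of "w + eta *\<^sub>R eps \<omega>"] by (simp add: algebra_simps)
  qed
  then show ?thesis
    unfolding surplus_eq_max_coord by (simp add: integrable_max_coord)
qed

end

end

lemma surplus_scale:
  assumes "eta > 0"
  shows "surplus M eps eta \<theta> = eta * surplus M eps 1 ((1 / eta) *\<^sub>R \<theta>)"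
proof -
  have "\<theta> + eta *\<^sub>R eps \<omega> = eta *\<^sub>R ((1 / eta) *\<^sub>R \<theta> + 1 *\<^sub>R eps \<omega>)" for \<omega>
    using assms by (simp add: algebra_simps)
  then show ?thesis
    unfolding surplus_eq_max_coord using assms by (simp add: max_coord_scaleR)
qed

lemma has_derivative_along_line:
  fixes F :: "'a::real_normed_vector \<Rightarrow> 'b::real_normed_vector"
  assumes "(F has_derivative F') (at (z + s *\<^sub>R d))"
  shows "((\<lambda>t. F (z + t *\<^sub>R d)) has_derivative (\<lambda>t. F' (t *\<^sub>R d))) (at s)"
proof -
  have "((\<lambda>t. z + t *\<^sub>R d) has_derivative (\<lambda>t. t *\<^sub>R d)) (at s)"
    by (auto intro!: derivative_eq_intros)
  from diff_chain_at[OF this assms] show ?thesis by (simp add: o_def)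
qed

lemma has_real_derivative_along_line:
  fixes F :: "'a::real_normed_vector \<Rightarrow> real"
  assumes "(F has_derivative F') (at (z + s *\<^sub>R d))"
  shows "((\<lambda>t. F (z + t *\<^sub>R d)) has_real_derivative F' d) (at s)"
proof -
  have "linear F'" using assms by (rule has_derivative_linear)
  then have "(\<lambda>t. F' (t *\<^sub>R d)) = (*) (F' d)"
    by (auto simp: linear_scale)
  with has_derivative_along_line[OF assms] show ?thesis
    by (simp add: has_field_derivative_def)
qed

lemma convex_on_has_derivative_above_tangent:
  fixes f :: "'a::real_normed_vector \<Rightarrow> real"
  assumes convex: "convex_on UNIV f" and deriv: "(f has_derivative f') (at z)"
  shows "f z + f' (\<theta> - z) \<le> f \<theta>"
proof -
  let ?p = "\<lambda>t. f (z + t *\<^sub>R (\<theta> - z))"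
  have "convex_on UNIV ?p"
  proof (rule convex_onI[OF _ convex_UNIV])
    fix t a b :: real assume "0 < t" "t < 1"
    moreover have "z + ((1 - t) * a + t * b) *\<^sub>R (\<theta> - z)
        = (1 - t) *\<^sub>R (z + a *\<^sub>R (\<theta> - z)) + t *\<^sub>R (z + b *\<^sub>R (\<theta> - z))"
      by (simp add: algebra_simps)
    ultimately show "?p ((1 - t) *\<^sub>R a + t *\<^sub>R b) \<le> (1 - t) * ?p a + t * ?p b"
      using convex_onD[OF convex, of t] by simp
  qed
  moreover have "(?p has_real_derivative f' (\<theta> - z)) (at 0)"
    using deriv by (intro has_real_derivative_along_line) simp
  ultimately have "?p 1 - ?p 0 \<ge> f' (\<theta> - z) * (1 - 0)"
    by (intro convex_on_imp_above_tangent) auto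
  then show ?thesis by simp
qed

lemma DERIV_nonpos_of_right_le:
  assumes "(\<phi> has_real_derivative D) (at 0)" and "\<And>s. s > 0 \<Longrightarrow> \<phi> s \<le> \<phi> 0"
  shows "D \<le> 0"
proof (rule ccontr)
  assume "\<not> D \<le> 0"
  then obtain d where "d > 0" and "\<And>h. 0 < h \<Longrightarrow> h < d \<Longrightarrow> \<phi> 0 < \<phi> (0 + h)"
    using DERIV_pos_inc_right[OF assms(1)] by force
  then have "\<phi> 0 < \<phi> (d / 2)" by simp
  with assms(2)[of "d / 2"] \<open>d > 0\<close> show False by simp
qed

lemma DERIV_second_order_upper_bound:
  fixes \<phi> :: "real \<Rightarrow> real"
  assumes "\<And>t. t \<in> {0..1} \<Longrightarrow> (\<phi> has_real_derivative \<phi>' t) (at t)"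
    and "\<And>t. t \<in> {0..1} \<Longrightarrow> (\<phi>' has_real_derivative \<phi>'' t) (at t)"
    and "\<And>t. t \<in> {0..1} \<Longrightarrow> \<phi>'' t \<le> K"
  shows "\<phi> 1 \<le> \<phi> 0 + \<phi>' 0 + K / 2"
proof -
  define diff where "diff m = (if m = 0 then \<phi> else if m = 1 then \<phi>' else \<phi>'')" for m :: nat
  have "\<forall>m t. m < 2 \<and> 0 \<le> t \<and> t \<le> 1 \<longrightarrow> (diff m has_real_derivative diff (Suc m) t) (at t)"
    using assms(1,2) by (auto simp: diff_def less_2_cases_iff)
  then obtain t where "0 < t" "t < 1"
    and "\<phi> 1 = (\<Sum>m<2. diff m 0 / fact m * 1 ^ m) + diff 2 t / fact 2 * 1 ^ 2"
    using Maclaurin[of 1 2 diff \<phi>] by (auto simp: diff_def)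
  then show ?thesis
    using assms(3)[of t] by (simp add: diff_def numeral_2_eq_2)
qed

section \<open>Smooth surplus functions\<close>

locale smooth_surplus =
  fixes f :: "real ^ 'n \<Rightarrow> real" and g :: "real ^ 'n \<Rightarrow> real ^ 'n"
    and H :: "real ^ 'n \<Rightarrow> real ^ 'n ^ 'n" and L :: real
  assumes convex: "convex_on UNIV f"
    and gradient: "\<And>\<theta>. (f has_derivative (\<lambda>h. g \<theta> \<bullet> h)) (at \<theta>)"
    and hessian: "\<And>\<theta>. (g has_derivative (\<lambda>h. H \<theta> *v h)) (at \<theta>)"
    and trace_le: "\<And>\<theta>. 2 * (\<Sum>i\<in>UNIV. H \<theta> $ i $ i) \<le> L"
    and mono: "\<And>v w. (\<And>k. v $ k \<le> w $ k) \<Longrightarrow> f v \<le> f w"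
    and add_const: "\<And>\<theta> c. f (\<theta> + c *\<^sub>R 1) = f \<theta> + c"
    and submodular: "\<And>i j s a w. i \<noteq> j \<Longrightarrow> 0 \<le> s \<Longrightarrow> 0 \<le> a \<Longrightarrow>
      f (w + s *\<^sub>R axis j 1 + a *\<^sub>R axis i 1) + f w \<le> f (w + s *\<^sub>R axis j 1) + f (w + a *\<^sub>R axis i 1)"
begin

lemma gradient_inequality: "f z + g z \<bullet> (\<theta> - z) \<le> f \<theta>"
  using convex_on_has_derivative_above_tangent[OF convex gradient] .

lemma gradient_in_prob_simplex: "g \<theta> \<in> prob_simplex"
proof -
  have "0 \<le> g \<theta> $ i" for i
  proof -
    have "f (\<theta> - axis i 1) \<le> f \<theta>" by (rule mono) (simp add: axis_def)
    then show ?thesis using gradient_inequality[of \<theta> "\<theta> - axis i 1"] by (simp add: inner_axis)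
  qed
  moreover have "g \<theta> \<bullet> 1 = 1"
    using gradient_inequality[of \<theta> "\<theta> + 1 *\<^sub>R 1"] gradient_inequality[of \<theta> "\<theta> + (-1) *\<^sub>R 1"]
      add_const[of \<theta> 1] add_const[of \<theta> "-1"]
    by simp
  ultimately show ?thesis
    unfolding prob_simplex_def by (simp add: inner_vec_def)
qed

lemma gradient_add_const: "g (\<theta> + c *\<^sub>R 1) = g \<theta>"
proof -
  have "((\<lambda>v. f (v + c *\<^sub>R 1)) has_derivative (\<lambda>h. g (\<theta> + c *\<^sub>R 1) \<bullet> h)) (at \<theta>)"
  proof -
    have "((\<lambda>v. v + c *\<^sub>R 1) has_derivative (\<lambda>h. h)) (at \<theta>)"
      by (auto intro!: derivative_eq_intros)
    from diff_chain_at[OF this gradient] show ?thesis by (simp add: o_def)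
  qed
  moreover have "((\<lambda>v. f (v + c *\<^sub>R 1)) has_derivative (\<lambda>h. g \<theta> \<bullet> h)) (at \<theta>)"
    using gradient[of \<theta>] by (auto simp: add_const intro!: derivative_eq_intros)
  ultimately have "(\<lambda>h. g (\<theta> + c *\<^sub>R 1) \<bullet> h) = (\<lambda>h. g \<theta> \<bullet> h)"
    by (rule has_derivative_unique)
  then show ?thesis by (metis vector_eq_rdot)
qed

lemma hessian_row_sum: "(\<Sum>j\<in>UNIV. H \<theta> $ i $ j) = 0"
proof -
  have "((\<lambda>t. g (\<theta> + t *\<^sub>R 1)) has_derivative (\<lambda>t. H \<theta> *v (t *\<^sub>R 1))) (at 0)"
    using has_derivative_along_line[of g _ \<theta> 0 1] hessian by simp
  moreover have "((\<lambda>t. g (\<theta> + t *\<^sub>R 1)) has_derivative (\<lambda>t. 0)) (at 0)"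
    by (simp add: gradient_add_const)
  ultimately have "(\<lambda>t. H \<theta> *v (t *\<^sub>R 1)) = (\<lambda>t. 0)"
    by (rule has_derivative_unique)
  then have "H \<theta> *v 1 = 0" by (metis scale_one)
  moreover have "(H \<theta> *v 1) $ i = (\<Sum>j\<in>UNIV. H \<theta> $ i $ j)"
    by (simp add: matrix_vector_mult_def)
  ultimately show ?thesis by simp
qed

(* By submodularity the slope of f in direction e_i is smaller at theta + s e_j than at theta;
   bound slopes by gradients and let the step a tend to 0. *)
lemma gradient_coord_antimono:
  assumes "i \<noteq> j" "0 \<le> s"
  shows "g (\<theta> + s *\<^sub>R axis j 1) $ i \<le> g \<theta> $ i"
proof -
  let ?p = "\<theta> + s *\<^sub>R axis j 1"
  have le: "g ?p $ i \<le> g (\<theta> + a *\<^sub>R axis i 1) $ i" if "0 < a" for a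
  proof -
    have "a * g ?p $ i \<le> f (?p + a *\<^sub>R axis i 1) - f ?p"
      using gradient_inequality[of ?p "?p + a *\<^sub>R axis i 1"] by (simp add: inner_axis)
    also have "\<dots> \<le> f (\<theta> + a *\<^sub>R axis i 1) - f \<theta>"
      using submodular[OF assms, of a \<theta>] that by simp
    also have "\<dots> \<le> a * g (\<theta> + a *\<^sub>R axis i 1) $ i"
      using gradient_inequality[of "\<theta> + a *\<^sub>R axis i 1" \<theta>] by (simp add: inner_axis)
    finally show ?thesis using that by simp
  qed
  have "((\<lambda>a. g (\<theta> + a *\<^sub>R axis i 1)) has_derivative (\<lambda>a. H \<theta> *v (a *\<^sub>R axis i 1))) (at 0)"
    using has_derivative_along_line[of g _ \<theta> 0 "axis i 1"] hessian by simp
  then have "isCont (\<lambda>a. g (\<theta> + a *\<^sub>R axis i 1)) 0"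
    by (rule has_derivative_continuous)
  then have "((\<lambda>a. g (\<theta> + a *\<^sub>R axis i 1) $ i) \<longlongrightarrow> g \<theta> $ i) (at_right 0)"
    unfolding isCont_def by (auto intro: tendsto_vec_nth tendsto_mono[OF at_within_le_at])
  moreover have "\<forall>\<^sub>F a in at_right 0. g ?p $ i \<le> g (\<theta> + a *\<^sub>R axis i 1) $ i"
    using eventually_at_right_less[of "0::real"] by (rule eventually_mono) (rule le)
  ultimately show ?thesis
    by (rule tendsto_lowerbound) simp
qed

lemma hessian_coord_has_derivative: "((\<lambda>v. g v $ i) has_derivative (\<lambda>h. (H \<theta> *v h) $ i)) (at \<theta>)"
  using bounded_linear.has_derivative[OF bounded_linear_vec_nth hessian] .

lemma hessian_offdiag_nonpos:
  assumes "i \<noteq> j" shows "H \<theta> $ i $ j \<le> 0"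
proof (rule DERIV_nonpos_of_right_le)
  show "((\<lambda>s. g (\<theta> + s *\<^sub>R axis j 1) $ i) has_real_derivative H \<theta> $ i $ j) (at 0)"
    using has_real_derivative_along_line[OF hessian_coord_has_derivative[of i "\<theta> + 0 *\<^sub>R axis j 1"]]
    by (simp add: matrix_vector_mult_basis column_def)
qed (use gradient_coord_antimono[OF assms] in simp)

(* With zero row sums, h' A h = sum_(i,j) (- A_ij) h_i (h_i - h_j): the weights - A_ij (i ~= j)
   are nonnegative and add up to A_ii along row i. *)
lemma hessian_quadratic_form_le:
  assumes h: "\<And>k. \<bar>h $ k\<bar> \<le> m"
  shows "h \<bullet> (H \<theta> *v h) \<le> L * m\<^sup>2"
proof -
  define A where "A = H \<theta>"
  have row: "(\<Sum>j\<in>UNIV. A $ i $ j) = 0" for i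
    unfolding A_def by (rule hessian_row_sum)
  have "h \<bullet> (A *v h) = (\<Sum>i\<in>UNIV. \<Sum>j\<in>UNIV. A $ i $ j * h $ j * h $ i)"
    by (simp add: inner_vec_def matrix_vector_mult_def sum_distrib_left algebra_simps)
  also have "\<dots> = (\<Sum>i\<in>UNIV. \<Sum>j\<in>UNIV. - A $ i $ j * (h $ i * (h $ i - h $ j)))"
  proof (rule sum.cong[OF refl])
    fix i
    have "(\<Sum>j\<in>UNIV. A $ i $ j * (h $ i * h $ i)) = 0"
      by (simp add: sum_distrib_right[symmetric] row)
    then show "(\<Sum>j\<in>UNIV. A $ i $ j * h $ j * h $ i)
        = (\<Sum>j\<in>UNIV. - A $ i $ j * (h $ i * (h $ i - h $ j)))"
      by (simp add: algebra_simps sum_subtractf)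
  qed
  also have "\<dots> \<le> (\<Sum>i\<in>UNIV. \<Sum>j\<in>UNIV. if i = j then 0 else - A $ i $ j * (2 * m\<^sup>2))"
  proof (intro sum_mono)
    fix i j
    have "h $ i * (h $ i - h $ j) \<le> \<bar>h $ i\<bar> * \<bar>h $ i - h $ j\<bar>"
      by (metis abs_ge_self abs_mult)
    also have "\<dots> \<le> m * (2 * m)"
      using h[of i] h[of j] by (intro mult_mono) auto
    finally have "h $ i * (h $ i - h $ j) \<le> 2 * m\<^sup>2" by (simp add: power2_eq_square)
    moreover have "i \<noteq> j \<Longrightarrow> 0 \<le> - A $ i $ j"
      unfolding A_def using hessian_offdiag_nonpos by simp
    ultimately show "- A $ i $ j * (h $ i * (h $ i - h $ j))
        \<le> (if i = j then 0 else - A $ i $ j * (2 * m\<^sup>2))"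
      by (auto intro: mult_left_mono_neg)
  qed
  also have "\<dots> = (\<Sum>i\<in>UNIV. A $ i $ i) * (2 * m\<^sup>2)"
  proof -
    have "(\<Sum>j\<in>UNIV. if i = j then 0 else - A $ i $ j * (2 * m\<^sup>2)) = A $ i $ i * (2 * m\<^sup>2)" for i
      by (simp add: sum.If_cases Compl_eq_Diff_UNIV sum_diff1 sum_negf sum_distrib_right[symmetric] row)
    then show ?thesis by (simp add: sum_distrib_right)
  qed
  also have "\<dots> \<le> L * m\<^sup>2"
    using mult_right_mono[OF trace_le[of \<theta>], of "m\<^sup>2"] unfolding A_def by simp
  finally show ?thesis unfolding A_def .
qed

lemma upper_quadratic_bound:
  assumes "\<And>k. \<bar>h $ k\<bar> \<le> m"
  shows "f (z + h) \<le> f z + g z \<bullet> h + L / 2 * m\<^sup>2"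
proof -
  have "((\<lambda>t. f (z + t *\<^sub>R h)) has_real_derivative g (z + t *\<^sub>R h) \<bullet> h) (at t)" for t
    by (rule has_real_derivative_along_line[OF gradient])
  moreover have "((\<lambda>t. g (z + t *\<^sub>R h) \<bullet> h) has_real_derivative (H (z + t *\<^sub>R h) *v h) \<bullet> h) (at t)"
    for t
    by (rule has_real_derivative_along_line
        [OF bounded_linear.has_derivative[OF bounded_linear_inner_left hessian]])
  moreover have "(H (z + t *\<^sub>R h) *v h) \<bullet> h \<le> L * m\<^sup>2" for t
    using hessian_quadratic_form_le[OF assms] by (simp add: inner_commute)
  ultimately have "f (z + 1 *\<^sub>R h) \<le> f (z + 0 *\<^sub>R h) + g (z + 0 *\<^sub>R h) \<bullet> h + L * m\<^sup>2 / 2"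
    by (intro DERIV_second_order_upper_bound)
  then show ?thesis by simp
qed

(* Comparing with the value at g z shows that x attains the conjugate at z, i.e. z minimises
   f theta - theta . x; by Fermat's rule g z - x = 0. *)
lemma conjugate_argmax_eq_gradient:
  assumes lower: "\<And>\<theta> y. y \<in> prob_simplex \<Longrightarrow> \<theta> \<bullet> y \<le> f \<theta>"
    and x: "x \<in> prob_simplex"
    and argmax: "\<forall>y\<in>prob_simplex. z \<bullet> y - (SUP \<theta>. \<theta> \<bullet> y - f \<theta>) \<le> z \<bullet> x - (SUP \<theta>. \<theta> \<bullet> x - f \<theta>)"
  shows "x = g z"
proof -
  have "\<theta> \<bullet> g z - f \<theta> \<le> z \<bullet> g z - f z" for \<theta>
    using gradient_inequality[of z \<theta>] by (simp add: inner_diff_right inner_commute)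
  then have "(SUP \<theta>. \<theta> \<bullet> g z - f \<theta>) \<le> z \<bullet> g z - f z"
    by (intro cSUP_least) auto
  then have "(SUP \<theta>. \<theta> \<bullet> x - f \<theta>) \<le> z \<bullet> x - f z"
    using argmax gradient_in_prob_simplex[of z] by fastforce
  moreover have "\<theta> \<bullet> x - f \<theta> \<le> (SUP \<theta>. \<theta> \<bullet> x - f \<theta>)" for \<theta>
    using lower[OF x] by (intro cSUP_upper bdd_aboveI[of _ 0]) force+
  ultimately have "\<forall>\<theta>\<in>UNIV. f z - z \<bullet> x \<le> f \<theta> - \<theta> \<bullet> x"
    by (smt (verit))
  moreover have "((\<lambda>\<theta>. f \<theta> - \<theta> \<bullet> x) has_derivative (\<lambda>h. g z \<bullet> h - h \<bullet> x)) (at z)"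
    using gradient by (auto intro!: derivative_eq_intros)
  ultimately have "(\<lambda>h. g z \<bullet> h - h \<bullet> x) = (\<lambda>h. 0)"
    using differential_zero_maxmin[of z UNIV] by blast
  then show ?thesis
    by (metis (no_types) eq_iff_diff_eq_0 inner_commute vector_eq_rdot)
qed

lemma optimistic_step_le:
  assumes "\<And>k. \<bar>(\<theta> - z) $ k\<bar> \<le> m"
  shows "f \<theta> \<le> f \<theta>' + g z \<bullet> (\<theta> - \<theta>') + L / 2 * m\<^sup>2"
  using upper_quadratic_bound[OF assms, of z] gradient_inequality[of z \<theta>']
  by (simp add: inner_diff_right)

end

lemma abs_nth_le_linf_norm: "\<bar>v $ k\<bar> \<le> linf_norm v"
  unfolding linf_norm_def by (rule Max_ge) auto

lemma cumul_step: "1 \<le> t \<Longrightarrow> cumul u t = cumul u (t - 1) + u t"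
proof -
  assume "1 \<le> t"
  then have "{1..t} = insert t {1..t - 1}" by auto
  then show ?thesis unfolding cumul_def by (simp add: add.commute)
qed

lemma payoff_lag_diff_le:
  fixes u :: "int \<Rightarrow> real ^ 'n"
  assumes u_nonpos: "\<forall>\<tau>\<le>0. u \<tau> = 0"
    and u_var: "\<forall>t\<in>{1..int T}. linf_norm (u t - u (t - 1)) \<le> B"
    and "0 \<le> B" and "t \<le> int T"
  shows "\<bar>(u t - u (t - int d)) $ k\<bar> \<le> real d * B"
proof (induction d)
  case (Suc d)
  define s where "s = t - int d"
  have "\<bar>(u s - u (s - 1)) $ k\<bar> \<le> B"
  proof (cases "1 \<le> s")
    case True
    with assms(4) have "s \<in> {1..int T}" unfolding s_def by simp
    then show ?thesis using u_var abs_nth_le_linf_norm order_trans by blast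
  next
    case False
    then show ?thesis using u_nonpos \<open>0 \<le> B\<close> by simp
  qed
  moreover have "(u t - u (t - int (Suc d))) $ k = (u t - u (t - int d)) $ k + (u s - u (s - 1)) $ k"
    unfolding s_def by (simp add: algebra_simps)
  ultimately show ?case
    using Suc.IH by (simp add: algebra_simps)
qed simp

lemma payoff_minus_recency_le:
  fixes u :: "int \<Rightarrow> real ^ 'n"
  assumes u_nonpos: "\<forall>\<tau>\<le>0. u \<tau> = 0"
    and u_var: "\<forall>t\<in>{1..int T}. linf_norm (u t - u (t - 1)) \<le> B"
    and B: "0 \<le> B" and t: "t \<le> int T" and S: "1 \<le> S"
  shows "\<bar>(u t - recency S u t) $ k\<bar> \<le> real S * B"
proof -
  define I where "I = {t - int S..t - 1}"
  have card: "card I = S" unfolding I_def by simp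
  have "(\<Sum>\<tau>\<in>I. u t $ k - u \<tau> $ k) = real S * u t $ k - (\<Sum>\<tau>\<in>I. u \<tau> $ k)"
    by (simp add: sum_subtractf card)
  then have "(u t - recency S u t) $ k = (\<Sum>\<tau>\<in>I. u t $ k - u \<tau> $ k) / real S"
    using S unfolding recency_def I_def[symmetric] by (simp add: diff_divide_distrib)
  moreover have "\<bar>\<Sum>\<tau>\<in>I. u t $ k - u \<tau> $ k\<bar> \<le> (\<Sum>\<tau>\<in>I. real S * B)"
  proof (intro order.trans[OF sum_abs] sum_mono)
    fix \<tau> assume "\<tau> \<in> I"
    define d where "d = nat (t - \<tau>)"
    have d: "\<tau> = t - int d" "d \<le> S"
      using \<open>\<tau> \<in> I\<close> unfolding I_def d_def by auto
    have "\<bar>(u t - u (t - int d)) $ k\<bar> \<le> real d * B"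
      by (rule payoff_lag_diff_le[OF u_nonpos u_var B t])
    also have "\<dots> \<le> real S * B" using d B by (simp add: mult_right_mono)
    finally show "\<bar>u t $ k - u \<tau> $ k\<bar> \<le> real S * B" using d by simp
  qed
  ultimately have "\<bar>(u t - recency S u t) $ k\<bar> \<le> real S * (real S * B) / real S"
    using card by (simp only: abs_divide abs_of_nat sum_constant) (intro divide_right_mono; simp)
  then show ?thesis using S by simp
qed

section \<open>Optimistic follow the regularized leader\<close>

locale oftrl = smooth_surplus f g H L
  for f :: "real ^ 'n \<Rightarrow> real" and g H L +
  fixes S :: nat and B :: real and T :: nat and u x :: "int \<Rightarrow> real ^ 'n"
  assumes lower: "\<And>\<theta> y. y \<in> prob_simplex \<Longrightarrow> \<theta> \<bullet> y \<le> f \<theta>"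
    and S_ge_1: "1 \<le> S" and B_nonneg: "0 \<le> B"
    and u_nonpos: "\<forall>\<tau>\<le>0. u \<tau> = 0"
    and u_var: "\<forall>t\<in>{1..int T}. linf_norm (u t - u (t - 1)) \<le> B"
    and x_simplex: "\<forall>t\<in>{1..int T}. x t \<in> prob_simplex"
    and x_argmax: "\<forall>t\<in>{1..int T}. \<forall>y\<in>prob_simplex.
      (cumul u (t - 1) + recency S u t) \<bullet> y - (SUP \<theta>. \<theta> \<bullet> y - f \<theta>)
      \<le> (cumul u (t - 1) + recency S u t) \<bullet> x t - (SUP \<theta>. \<theta> \<bullet> x t - f \<theta>)"
begin

lemma iterate_eq_gradient:
  "t \<in> {1..int T} \<Longrightarrow> x t = g (cumul u (t - 1) + recency S u t)"
  using conjugate_argmax_eq_gradient[OF lower] x_simplex x_argmax by blast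

lemma cumul_step_le:
  assumes t: "t \<in> {1..int T}"
  shows "f (cumul u t) \<le> f (cumul u (t - 1)) + u t \<bullet> x t + L / 2 * (real S * B)\<^sup>2"
proof -
  have step: "cumul u t = cumul u (t - 1) + u t" using t by (simp add: cumul_step)
  have "\<bar>(cumul u t - (cumul u (t - 1) + recency S u t)) $ k\<bar> \<le> real S * B" for k
    using payoff_minus_recency_le[OF u_nonpos u_var B_nonneg _ S_ge_1] t step by simp
  from optimistic_step_le[OF this, of "cumul u (t - 1)"]
  show ?thesis
    using iterate_eq_gradient[OF t] step by (simp add: inner_commute)
qed

lemma regret_le: "regret u x T \<le> f 0 + real T * (L / 2 * (real S * B)\<^sup>2)"
proof -
  define K where "K = L / 2 * (real S * B)\<^sup>2"
  have "f (cumul u (int n)) \<le> f 0 + (\<Sum>t\<in>{1..int n}. u t \<bullet> x t) + real n * K" if "n \<le> T" for n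
    using that
  proof (induction n)
    case 0
    then show ?case by (simp add: cumul_def)
  next
    case (Suc n)
    then have "f (cumul u (int (Suc n))) \<le> f (cumul u (int n)) + u (Suc n) \<bullet> x (Suc n) + K"
      using cumul_step_le[of "int (Suc n)"] unfolding K_def by simp
    moreover have "{1..int (Suc n)} = insert (int (Suc n)) {1..int n}" by auto
    ultimately show ?case using Suc by (simp add: algebra_simps)
  qed
  moreover have "(SUP y\<in>prob_simplex. cumul u (int T) \<bullet> y) \<le> f (cumul u (int T))"
    using lower axis_in_prob_simplex by (intro cSUP_least) auto
  ultimately show ?thesis
    unfolding regret_def K_def by fastforce
qed

end

lemma smooth_surplus_surplus:
  fixes M :: "'a measure" and eps :: "'a \<Rightarrow> real ^ 'n"
  assumes prob: "prob_space M"
    and integ: "\<forall>i. integrable M (\<lambda>\<omega>. eps \<omega> $ i)"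
    and grad: "\<forall>\<theta>. (surplus M eps 1 has_derivative (\<lambda>h. g \<theta> \<bullet> h)) (at \<theta>)"
    and hess: "\<forall>\<theta>. (g has_derivative (\<lambda>h. H \<theta> *v h)) (at \<theta>)"
    and trace: "\<forall>\<theta>. 2 * (\<Sum>i\<in>UNIV. H \<theta> $ i $ i) \<le> L"
    and eta: "0 < eta"
  shows "smooth_surplus (surplus M eps eta) (\<lambda>\<theta>. g ((1 / eta) *\<^sub>R \<theta>))
    (\<lambda>\<theta>. (1 / eta) *\<^sub>R H ((1 / eta) *\<^sub>R \<theta>)) (L / eta)"
proof
  fix \<theta> :: "real ^ 'n"
  have scale: "((\<lambda>\<theta>. (1 / eta) *\<^sub>R \<theta>) has_derivative (\<lambda>h. (1 / eta) *\<^sub>R h)) (at \<theta>)"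
    by (auto intro!: derivative_eq_intros)
  have "((\<lambda>\<theta>. eta * surplus M eps 1 ((1 / eta) *\<^sub>R \<theta>)) has_derivative
      (\<lambda>h. eta * (g ((1 / eta) *\<^sub>R \<theta>) \<bullet> ((1 / eta) *\<^sub>R h)))) (at \<theta>)"
    using diff_chain_at[OF scale grad[rule_format]] by (intro has_derivative_mult_right) (simp add: o_def)
  then show "(surplus M eps eta has_derivative (\<lambda>h. g ((1 / eta) *\<^sub>R \<theta>) \<bullet> h)) (at \<theta>)"
    using eta by (simp add: surplus_scale[OF eta, abs_def])
  have "((\<lambda>\<theta>. g ((1 / eta) *\<^sub>R \<theta>)) has_derivative (\<lambda>h. H ((1 / eta) *\<^sub>R \<theta>) *v ((1 / eta) *\<^sub>R h))) (at \<theta>)"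
    using diff_chain_at[OF scale hess[rule_format]] by (simp add: o_def)
  then show "((\<lambda>\<theta>. g ((1 / eta) *\<^sub>R \<theta>)) has_derivative
      (\<lambda>h. ((1 / eta) *\<^sub>R H ((1 / eta) *\<^sub>R \<theta>)) *v h)) (at \<theta>)"
    by (simp add: matrix_scaleR_vector_ac)
  show "2 * (\<Sum>i\<in>UNIV. ((1 / eta) *\<^sub>R H ((1 / eta) *\<^sub>R \<theta>)) $ i $ i) \<le> L / eta"
    using trace eta by (simp add: sum_divide_distrib[symmetric] divide_right_mono)
qed (auto intro: prob_space.surplus_mono[OF prob integ] prob_space.surplus_submodular[OF prob integ]
    simp: prob_space.convex_surplus[OF prob integ] prob_space.surplus_add_const[OF prob integ])

lemma regret_zero_horizon:
  fixes u :: "int \<Rightarrow> real ^ 'n"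
  shows "regret u x 0 = 0"
proof -
  have "(prob_simplex :: (real ^ 'n) set) \<noteq> {}" using axis_in_prob_simplex by blast
  then show ?thesis by (simp add: regret_def cumul_def)
qed

lemma tuned_step_size:
  assumes "0 < a" "0 \<le> Q" "eta = sqrt (Q / (2 * a))"
  shows "eta * a + Q / (2 * eta) = sqrt (2 * a * Q)"
proof (cases "Q = 0")
  case False
  with assms have eta: "0 < eta" "eta\<^sup>2 = Q / (2 * a)" by simp_all
  then have "eta * a + Q / (2 * eta) = Q / eta"
    using assms(1) by (simp add: field_simps power2_eq_square)
  also have "\<dots> = sqrt (2 * a * Q)"
    using eta assms(1,2) False
    by (intro real_sqrt_unique[symmetric]) (auto simp: power_divide power2_eq_square)
  finally show ?thesis .
qed (use assms in simp)

theorem proposition5: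
  fixes M :: "'a measure" and eps :: "'a \<Rightarrow> real ^ 'n"
    and g :: "real ^ 'n \<Rightarrow> real ^ 'n" and H :: "real ^ 'n \<Rightarrow> real ^ 'n ^ 'n"
    and L B :: real and S T :: nat
    and u x :: "int \<Rightarrow> real ^ 'n" and eta :: real
  assumes N2: "CARD('n) \<ge> 2"
    (* Assumption 1 *)
    and prob: "prob_space M"
    and meas: "eps \<in> borel_measurable M"
    and integ: "\<forall>i. integrable M (\<lambda>\<omega>. eps \<omega> $ i)"
    and mean0: "\<forall>i. (\<integral>\<omega>. eps \<omega> $ i \<partial>M) = 0"
    and abscont: "absolutely_continuous lborel (distr M borel eps)"
    and fullsupp: "\<forall>U. open U \<and> U \<noteq> {} \<longrightarrow> 0 < emeasure (distr M borel eps) U"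
    (* Assumption 2: phi_1 is C^2 with gradient g and Hessian H, 2 tr(H) \<le> L *)
    and grad: "\<forall>\<theta>. (surplus M eps 1 has_derivative (\<lambda>h. g \<theta> \<bullet> h)) (at \<theta>)"
    and hess: "\<forall>\<theta>. (g has_derivative (\<lambda>h. H \<theta> *v h)) (at \<theta>)"
    and hess_cont: "continuous_on UNIV H"
    and Lpos: "L > 0"
    and trace: "\<forall>\<theta>. 2 * (\<Sum>i\<in>UNIV. H \<theta> $ i $ i) \<le> L"
    (* setting *)
    and S1: "S \<ge> 1" and Bpos: "B > 0"
    and u_nonpos: "\<forall>\<tau>\<le>0. u \<tau> = 0"
    and u_var: "\<forall>t\<in>{1..int T}. linf_norm (u t - u (t - 1)) \<le> B"
    and phi0: "surplus M eps 1 0 > 0"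
    and eta_def: "eta = sqrt (L * real T * real S ^ 2 * B ^ 2 / (2 * surplus M eps 1 0))"
    (* OFTRL iterates *)
    and x_simplex: "\<forall>t\<in>{1..int T}. x t \<in> prob_simplex"
    and x_argmax: "\<forall>t\<in>{1..int T}. \<forall>y\<in>prob_simplex.
        (cumul u (t - 1) + recency S u t) \<bullet> y - regularizer M eps eta y
        \<le> (cumul u (t - 1) + recency S u t) \<bullet> x t - regularizer M eps eta (x t)"
  shows "regret u x T \<le> real S * B * sqrt (2 * L * real T * surplus M eps 1 0)"
proof (cases "T = 0")
  case True
  then show ?thesis by (simp add: regret_zero_horizon)
next
  case False
  let ?a = "surplus M eps 1 0"
  define Q where "Q = L * real T * (real S * B)\<^sup>2"
  have eta_pos: "0 < eta" using eta_def Lpos phi0 S1 Bpos False by simp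
  interpret oftrl "surplus M eps eta" "\<lambda>\<theta>. g ((1 / eta) *\<^sub>R \<theta>)"
    "\<lambda>\<theta>. (1 / eta) *\<^sub>R H ((1 / eta) *\<^sub>R \<theta>)" "L / eta" S B T u x
    using smooth_surplus_surplus[OF prob integ grad hess trace eta_pos]
      prob_space.surplus_ge_inner[OF prob integ mean0] S1 Bpos u_nonpos u_var x_simplex
      x_argmax[unfolded regularizer_def]
    by (intro oftrl.intro oftrl_axioms.intro) auto
  have "regret u x T \<le> eta * ?a + Q / (2 * eta)"
    using regret_le surplus_scale[OF eta_pos, of M eps 0] by (simp add: Q_def ac_simps)
  also have "\<dots> = sqrt (2 * ?a * Q)"
    using Lpos phi0 by (intro tuned_step_size) (simp_all add: Q_def eta_def power_mult_distrib)
  also have "\<dots> = real S * B * sqrt (2 * L * real T * ?a)"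
    using Bpos by (simp add: Q_def real_sqrt_mult ac_simps)
  finally show ?thesis .
qed

end
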